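(* Let $d\ge 1$ and let $j\in L^1(\mathbb{R}^d)$ be given by $j(x)=(2\pi)^{-d}\int_{\mathbb{R}^d}e^{ix\cdot t}\,d\rho(t)$ for a finite positive Borel measure $\rho$ on $\mathbb{R}^d$, and let $J$ be the integral operator on $L^2(\mathbb{R}^d)$ with kernel $J(x,y)=j(x-y)$. Let $\Lambda\subset\mathbb{R}^d$ be a bounded Borel set, let $\zeta_\Lambda\in\Gamma_\Lambda$ and $\xi\in\mathcal{R}_\Lambda$. Then the limit $$H_\Lambda^{(J)}(\zeta_\Lambda;\xi):=\lim_{\Delta\uparrow\mathbb{R}^d}\big[U^{(J)}(\zeta_\Lambda)+W^{(J)}(\zeta_\Lambda;\widehat\xi_{\Delta\setminus\Lambda})\big],$$ taken over bounded Borel sets $\Delta\supset\Lambda$ increasing to $\mathbb{R}^d$, exists (in $\mathbb{R}\cup\{+\infty\}$).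
   Context: Configurations: $\mathcal{N}$ is the space of locally finite integer-valued Radon measures on $\mathbb{R}^d$; $\Gamma\subset\mathcal{N}$ is the set of simple ones, identified with locally finite subsets of $\mathbb{R}^d$. For $\Lambda\subset\mathbb{R}^d$, $\xi_\Lambda=\xi\cap\Lambda$ is the restriction, and $\Gamma_\Lambda$ is the set of simple configurations supported in $\Lambda$ (finite when $\Lambda$ is bounded). For a finite tuple or configuration $\underline x_n=(x_1,\dots,x_n)$, $J(\underline x_n,\underline x_n)$ denotes the matrix $(j(x_i-x_k))_{1\le i,k\le n}$, which is positive semidefinite. Potential: $U^{(J)}(x_1,\dots,x_n):=-\log\det(j(x_i-x_k))_{1\le i,k\le n}$, with $-\log 0:=+\infty$ and $U^{(J)}(\emptyset)=0$. For disjoint finite configurations $\xi_1,\xi_2$, the mutual energy is $W^{(J)}(\xi_1;\xi_2):=U^{(J)}(\xi_1\cup\xi_2)-U^{(J)}(\xi_1)-U^{(J)}(\xi_2)$ if $U^{(J)}(\xi_1\cup\xi_2)<\infty$. In that case $U^{(J)}(\xi_1)$ and $U^{(J)}(\xi_2)$ are finite by Fischer's inequality. Otherwise $W^{(J)}(\xi_1;\xi_2):=+\infty$. Interaction range: $R:=\inf\{R'>0: j(x)=0\text{ whenever }|x|\ge R'\}\in(0,+\infty]$. Boundary particles: if $R=\infty$, $\xi_{\partial\Lambda}:=\xi_{\Lambda^c}$. If $R<\infty$, $\xi_{\partial\Lambda}$ is the set of $x\in\xi_{\Lambda^c}$ for which there exist points $x_{j_1},\dots,x_{j_k}\in\xi_{\Lambda^c}$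 with $x_{j_k}=x$ and a point $x_{j_0}\in\Lambda$ such that $|x_{j_l}-x_{j_{l-1}}|<R$ for $l=1,\dots,k$. For bounded $\Delta$, $\widehat\xi_\Delta:=\xi_\Delta\cap\xi_{\partial\Lambda}$. Possible boundary conditions: $\mathcal{R}_\Lambda:=\{\xi\in\mathcal{N}:\det J(\widehat\xi_\Delta,\widehat\xi_\Delta)\neq0\text{ for all bounded }\Delta\subset\Lambda^c\}$. *)

theory Defs
  imports "HOL-Analysis.Analysis" "HOL-Library.Multiset" "HOL-Library.Extended_Real"
    "Jordan_Normal_Form.Determinant"
begin

text \<open>A general configuration in N
  (locally finite integer-valued Radon measure) is represented by its multiplicity
  function; finite configurations are finite multisets.\<close>

definition locally_finite_config :: "('a::metric_space \<Rightarrow> nat) \<Rightarrow> bool" where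
  "locally_finite_config \<xi> \<longleftrightarrow> (\<forall>B. bounded B \<longrightarrow> finite {x\<in>B. 0 < \<xi> x})"

text \<open>Restriction of a configuration to a set S, as a finite multiset
  (meaningful when only finitely many points of the configuration lie in S).\<close>
definition restr_config :: "('a \<Rightarrow> nat) \<Rightarrow> 'a set \<Rightarrow> 'a multiset" where
  "restr_config \<xi> S = (\<Sum>x\<in>{x\<in>S. 0 < \<xi> x}. replicate_mset (\<xi> x) x)"

definition Jmat :: "('a::ab_group_add \<Rightarrow> complex) \<Rightarrow> 'a list \<Rightarrow> complex mat" where
  "Jmat j xs = Matrix.mat (length xs) (length xs) (\<lambda>(i,k). j (xs ! i - xs ! k))"

text \<open>Determinant of J on a finite configuration (with multiplicities); it does not
  depend on the chosen enumeration.\<close>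
definition detJ :: "('a::ab_group_add \<Rightarrow> complex) \<Rightarrow> 'a multiset \<Rightarrow> complex" where
  "detJ j M = Determinant.det (Jmat j (SOME xs. mset xs = M))"

text \<open>U^(J)(x_1..x_n) = - log det (j(x_i-x_k)), with -log 0 = +infinity and U(empty)=0.
  The determinant is real and nonnegative (positive semidefinite Hermitian matrix), so
  it equals its modulus.\<close>
definition U_J :: "('a::ab_group_add \<Rightarrow> complex) \<Rightarrow> 'a multiset \<Rightarrow> ereal" where
  "U_J j M = (if detJ j M = 0 then \<infinity> else ereal (- ln (cmod (detJ j M))))"

definition W_J :: "('a::ab_group_add \<Rightarrow> complex) \<Rightarrow> 'a multiset \<Rightarrow> 'a multiset \<Rightarrow> ereal" where
  "W_J j M1 M2 = (if U_J j (M1 + M2) < \<infinity> then U_J j (M1 + M2) - U_J j M1 - U_J j M2 else \<infinity>)"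

definition interaction_range :: "('a::real_normed_vector \<Rightarrow> complex) \<Rightarrow> ereal" where
  "interaction_range j = Inf (ereal ` {R'. R' > 0 \<and> (\<forall>x. norm x \<ge> R' \<longrightarrow> j x = 0)})"

definition boundary_pts ::
  "('a::real_normed_vector \<Rightarrow> complex) \<Rightarrow> 'a set \<Rightarrow> ('a \<Rightarrow> nat) \<Rightarrow> 'a set" where
  "boundary_pts j \<Lambda> \<xi> =
     (let P = {x. x \<notin> \<Lambda> \<and> 0 < \<xi> x}; R = interaction_range j in
      if R = \<infinity> then P
      else {x\<in>P. \<exists>y\<in>\<Lambda>. \<exists>z\<in>P. ereal (dist y z) < R \<and>
               (z, x) \<in> {(a, b). a \<in> P \<and> b \<in> P \<and> ereal (dist a b) < R}\<^sup>*})"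

definition xi_hat ::
  "('a::real_normed_vector \<Rightarrow> complex) \<Rightarrow> 'a set \<Rightarrow> ('a \<Rightarrow> nat) \<Rightarrow> 'a set \<Rightarrow> 'a multiset" where
  "xi_hat j \<Lambda> \<xi> \<Delta> = restr_config \<xi> (\<Delta> \<inter> boundary_pts j \<Lambda> \<xi>)"

definition possible_bc ::
  "('a::real_normed_vector \<Rightarrow> complex) \<Rightarrow> 'a set \<Rightarrow> ('a \<Rightarrow> nat) set" where
  "possible_bc j \<Lambda> = {\<xi>. locally_finite_config \<xi> \<and>
      (\<forall>\<Delta>. bounded \<Delta> \<and> \<Delta> \<subseteq> - \<Lambda> \<longrightarrow> detJ j (xi_hat j \<Lambda> \<xi> \<Delta>) \<noteq> 0)}"

definition incr_to_univ :: "'a::euclidean_space set \<Rightarrow> 'a set filter" where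
  "incr_to_univ \<Lambda> = (INF \<Delta>0\<in>{\<Delta>. bounded \<Delta> \<and> \<Delta> \<in> sets borel \<and> \<Lambda> \<subseteq> \<Delta>}.
      principal {\<Delta>. bounded \<Delta> \<and> \<Delta> \<in> sets borel \<and> \<Delta>0 \<subseteq> \<Delta>})"

end

theory Submission
  imports Defs
begin

text \<open>Since j is the Fourier transform of a positive measure, it is a positive semidefinite
  kernel. Gram determinants of such a kernel factor, as in Gram--Schmidt, into squared distances
  in its reproducing kernel Hilbert space: det J(xs @ ys) = det J(xs) times the product over k of
  the squared distance of y_k to the span of xs and the earlier y's. Hence, for a boundary
  configuration S with det J(S) \<noteq> 0, U(A) + W(A; S) = - ln of the corresponding product for A
  over S. Enlarging S can only shrink these distances, so the energy increases with \<Delta>, and a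
  monotone net in the extended reals converges to its supremum.\<close>

section \<open>Sesquilinear forms of a kernel\<close>

text \<open>A list of pairs (c, x) stands for the finite combination of point masses \<Sum> c \<delta>(x).\<close>

definition kernel_form ::
  "('a::ab_group_add \<Rightarrow> complex) \<Rightarrow> (complex \<times> 'a) list \<Rightarrow> (complex \<times> 'a) list \<Rightarrow> complex" where
  "kernel_form j L1 L2 = (\<Sum>p\<leftarrow>L1. \<Sum>q\<leftarrow>L2. cnj (fst p) * fst q * j (snd p - snd q))"

definition scale_comb :: "complex \<Rightarrow> (complex \<times> 'a) list \<Rightarrow> (complex \<times> 'a) list" where
  "scale_comb a L = map (\<lambda>p. (a * fst p, snd p)) L"

lemma scale_comb_points [simp]: "snd ` set (scale_comb a L) = snd ` set L"
  by (force simp: scale_comb_def)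

lemma kernel_form_Nil [simp]: "kernel_form j [] L = 0" "kernel_form j L [] = 0"
  by (simp_all add: kernel_form_def)

lemma kernel_form_append_left: "kernel_form j (L1 @ L2) L = kernel_form j L1 L + kernel_form j L2 L"
  by (simp add: kernel_form_def)

lemma kernel_form_append_right: "kernel_form j L (L1 @ L2) = kernel_form j L L1 + kernel_form j L L2"
  by (simp add: kernel_form_def sum_list_addf)

lemma kernel_form_scale_left: "kernel_form j (scale_comb a L1) L2 = cnj a * kernel_form j L1 L2"
  by (simp add: kernel_form_def scale_comb_def o_def sum_list_const_mult[symmetric] ac_simps)

lemma kernel_form_scale_right: "kernel_form j L1 (scale_comb a L2) = a * kernel_form j L1 L2"
  by (simp add: kernel_form_def scale_comb_def o_def sum_list_const_mult[symmetric] ac_simps)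

lemmas kernel_form_linear =
  kernel_form_append_left kernel_form_append_right kernel_form_scale_left kernel_form_scale_right

lemma kernel_form_point: "kernel_form j [(1, x)] L = (\<Sum>q\<leftarrow>L. fst q * j (x - snd q))"
  by (simp add: kernel_form_def)

lemma kernel_form_expand_left:
  "kernel_form j E L = (\<Sum>p\<leftarrow>E. cnj (fst p) * kernel_form j [(1, snd p)] L)"
  by (induction E) (auto simp: kernel_form_def sum_list_const_mult mult.assoc)

lemma kernel_form_left_eq_0:
  assumes "\<And>y. y \<in> snd ` set E \<Longrightarrow> kernel_form j [(1, y)] L = 0"
  shows "kernel_form j E L = 0"
  unfolding kernel_form_expand_left[of j E] using assms by (induction E) auto

lemma cnj_sum_list: "cnj (\<Sum>x\<leftarrow>xs. f x) = (\<Sum>x\<leftarrow>xs. cnj (f x))"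
  by (induction xs) auto

text \<open>In the reproducing kernel Hilbert space of j, this is the squared distance from the
  evaluation at w to the span of the evaluations at the points of F.\<close>

definition sqdist_span :: "('a::ab_group_add \<Rightarrow> complex) \<Rightarrow> 'a set \<Rightarrow> 'a \<Rightarrow> real" where
  "sqdist_span j F w = Inf {Re (kernel_form j ((1, w) # ps) ((1, w) # ps)) | ps. snd ` set ps \<subseteq> F}"

definition sqdist_prod :: "('a::ab_group_add \<Rightarrow> complex) \<Rightarrow> 'a set \<Rightarrow> 'a list \<Rightarrow> real" where
  "sqdist_prod j F ys = (\<Prod>k<length ys. sqdist_span j (F \<union> set (take k ys)) (ys ! k))"

section \<open>Positive semidefinite kernels\<close>

locale pos_semidef_kernel =
  fixes j :: "'a::ab_group_add \<Rightarrow> complex"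
  assumes hermitian: "\<And>x. j (- x) = cnj (j x)"
    and form_real: "\<And>L. kernel_form j L L \<in> \<real>"
    and form_nonneg: "\<And>L. 0 \<le> Re (kernel_form j L L)"
begin

lemma form_self_eq_Re: "kernel_form j L L = of_real (Re (kernel_form j L L))"
  using form_real[of L] by (simp add: complex_is_Real_iff complex_eq_iff)

lemma kernel_form_swap: "kernel_form j L2 L1 = cnj (kernel_form j L1 L2)"
proof (induction L1)
  case (Cons p L1)
  have "cnj (j (a - b)) = j (b - a)" for a b
    using hermitian[of "a - b"] by simp
  then have "kernel_form j L2 [p] = cnj (kernel_form j [p] L2)"
    by (simp add: kernel_form_def cnj_sum_list ac_simps)
  then show ?case
    using Cons.IH kernel_form_append_left[of j "[p]" L1] kernel_form_append_right[of j L2 "[p]" L1]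
    by simp
qed simp

text \<open>Cauchy--Schwarz in its weakest form: a null combination is orthogonal to everything.
  Testing nonnegativity on L - s \<beta> U with \<beta> = \<langle>U, L\<rangle> and s small gives 0 \<le> - s |\<beta>|^2.\<close>

lemma kernel_form_null:
  assumes "kernel_form j L L = 0"
  shows "kernel_form j U L = 0"
proof -
  define \<beta> where "\<beta> = kernel_form j U L"
  define Q where "Q = Re (kernel_form j U U)"
  define s :: real where "s = 1 / (Q + 1)"
  have "Q \<ge> 0" using form_nonneg by (simp add: Q_def)
  then have s: "s > 0" "s * Q \<le> 1" by (simp_all add: s_def field_simps)
  define \<alpha> where "\<alpha> = - of_real s * \<beta>"
  define X where "X = L @ scale_comb \<alpha> U"
  have "kernel_form j X X = \<alpha> * cnj \<beta> + cnj \<alpha> * \<beta> + cnj \<alpha> * \<alpha> * of_real Q"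
    using assms kernel_form_swap[of L U] form_self_eq_Re[of U]
    unfolding X_def kernel_form_linear \<beta>_def Q_def by (simp add: algebra_simps)
  also have "\<dots> = of_real (s * (s * Q - 2)) * (\<beta> * cnj \<beta>)"
    unfolding \<alpha>_def by (simp add: algebra_simps)
  also have "\<beta> * cnj \<beta> = of_real ((cmod \<beta>)\<^sup>2)"
    using complex_norm_square[of \<beta>] by simp
  finally have "kernel_form j X X = of_real (s * (s * Q - 2) * (cmod \<beta>)\<^sup>2)"
    by simp
  then have "0 \<le> s * (s * Q - 2) * (cmod \<beta>)\<^sup>2"
    using form_nonneg[of X] by simp
  moreover have "s * (s * Q - 2) < 0" using s by (intro mult_pos_neg) auto
  ultimately have "cmod \<beta> = 0"
    by (metis mult_less_0_iff not_le power2_less_eq_zero_iff zero_less_power2)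
  then show ?thesis by (simp add: \<beta>_def)
qed

lemma sqdist_span_nonneg: "0 \<le> sqdist_span j F w"
  unfolding sqdist_span_def
  by (rule cInf_greatest) (auto intro!: exI[of _ "[]"] form_nonneg)

lemma sqdist_span_antimono:
  assumes "F \<subseteq> G"
  shows "sqdist_span j G w \<le> sqdist_span j F w"
  unfolding sqdist_span_def
proof (rule cInf_superset_mono)
  show "{Re (kernel_form j ((1, w) # ps) ((1, w) # ps)) |ps. snd ` set ps \<subseteq> F} \<noteq> {}"
    by (auto intro!: exI[of _ "[]"])
  show "bdd_below {Re (kernel_form j ((1, w) # ps) ((1, w) # ps)) |ps. snd ` set ps \<subseteq> G}"
    by (intro bdd_belowI[of _ 0]) (auto intro: form_nonneg)
qed (use assms in auto)

lemma sqdist_prod_nonneg: "0 \<le> sqdist_prod j F ys"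
  unfolding sqdist_prod_def by (intro prod_nonneg sqdist_span_nonneg)

lemma sqdist_prod_antimono:
  assumes "F \<subseteq> G"
  shows "sqdist_prod j G ys \<le> sqdist_prod j F ys"
  unfolding sqdist_prod_def using assms
  by (intro prod_mono conjI sqdist_span_nonneg sqdist_span_antimono) auto

text \<open>Pythagoras: a residual orthogonal to F realises the distance to the span of F.\<close>

lemma sqdist_span_eq_residual:
  assumes ps: "snd ` set ps \<subseteq> F"
    and orth: "\<And>y. y \<in> F \<Longrightarrow> kernel_form j [(1, y)] ((1, w) # ps) = 0"
  shows "kernel_form j ((1, w) # ps) ((1, w) # ps) = of_real (sqdist_span j F w)"
proof -
  define W :: "(complex \<times> 'a) list" where "W = [(1, w)]"
  define D where "D = W @ ps"
  have orth_left: "kernel_form j E D = 0" if "snd ` set E \<subseteq> F" for E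
    by (rule kernel_form_left_eq_0) (use that orth in \<open>auto simp: D_def W_def\<close>)
  have orth_right: "kernel_form j D E = 0" if "snd ` set E \<subseteq> F" for E
    using kernel_form_swap[of E D] orth_left[OF that] by simp
  have minimal: "Re (kernel_form j D D) \<le> Re (kernel_form j (W @ qs) (W @ qs))"
    if qs: "snd ` set qs \<subseteq> F" for qs
  proof -
    define E where "E = qs @ scale_comb (-1) ps"
    have E: "snd ` set E \<subseteq> F" using qs ps by (simp add: E_def image_Un)
    have "kernel_form j (W @ qs) (W @ qs) = kernel_form j (D @ E) (D @ E)"
      unfolding D_def E_def kernel_form_linear by (simp add: algebra_simps)
    also have "\<dots> = kernel_form j D D + kernel_form j E E"
      unfolding kernel_form_linear using orth_left[OF E] orth_right[OF E] by simp
    finally show ?thesis using form_nonneg[of E] by simp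
  qed
  have "sqdist_span j F w = Re (kernel_form j D D)"
    unfolding sqdist_span_def
  proof (rule cInf_eq_minimum)
    show "Re (kernel_form j D D) \<in> {Re (kernel_form j ((1, w) # ps) ((1, w) # ps)) |ps. snd ` set ps \<subseteq> F}"
      using ps by (auto simp: D_def W_def)
  qed (use minimal in \<open>auto simp: W_def\<close>)
  then show ?thesis using form_self_eq_Re[of D] by (simp add: D_def W_def)
qed

end

section \<open>Gram determinants\<close>

lemma Jmat_carrier [simp]: "Jmat j xs \<in> carrier_mat (length xs) (length xs)"
  by (simp add: Jmat_def)

lemma Jmat_dims [simp]: "dim_row (Jmat j xs) = length xs" "dim_col (Jmat j xs) = length xs"
  by (simp_all add: Jmat_def)

lemma Jmat_index [simp]:
  "i < length xs \<Longrightarrow> k < length xs \<Longrightarrow> Jmat j xs $$ (i, k) = j (xs ! i - xs ! k)"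
  by (simp add: Jmat_def)

lemma det_Jmat_Nil [simp]: "det (Jmat j []) = 1"
  by (rule det_dim_zero) (simp add: Jmat_def)

definition vec_comb :: "complex vec \<Rightarrow> 'a list \<Rightarrow> (complex \<times> 'a) list" where
  "vec_comb v xs = map (\<lambda>i. (v $ i, xs ! i)) [0..<length xs]"

lemma vec_comb_points: "snd ` set (vec_comb v xs) = set xs"
  by (force simp: vec_comb_def in_set_conv_nth image_iff)

lemma kernel_form_point_vec_comb:
  "kernel_form j [(1, x)] (vec_comb v xs) = (\<Sum>k<length xs. v $ k * j (x - xs ! k))"
  unfolding kernel_form_point vec_comb_def
  by (simp add: interv_sum_list_conv_sum_set_nat atLeast0LessThan)

lemma Jmat_mult_vec:
  assumes "i < length xs" "v \<in> carrier_vec (length xs)"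
  shows "(Jmat j xs *\<^sub>v v) $ i = kernel_form j [(1, xs ! i)] (vec_comb v xs)"
proof -
  have "(Jmat j xs *\<^sub>v v) $ i = (\<Sum>k<length xs. Jmat j xs $$ (i, k) * v $ k)"
    using assms by (simp add: scalar_prod_def atLeast0LessThan)
  also have "\<dots> = (\<Sum>k<length xs. v $ k * j (xs ! i - xs ! k))"
    using assms by (intro sum.cong) auto
  finally show ?thesis unfolding kernel_form_point_vec_comb .
qed

lemma det_nonzero_imp_solvable:
  fixes A :: "'a::field mat"
  assumes A: "A \<in> carrier_mat n n" and "det A \<noteq> 0" and b: "b \<in> carrier_vec n"
  obtains x where "x \<in> carrier_vec n" "A *\<^sub>v x = b"
proof -
  obtain B where B: "B \<in> carrier_mat n n" "A * B = 1\<^sub>m n"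
    using det_non_zero_imp_unit[OF A \<open>det A \<noteq> 0\<close>] unfolding Units_def ring_mat_def by auto
  have "A *\<^sub>v (B *\<^sub>v b) = b"
    using assoc_mult_mat_vec[OF A B(1) b] B(2) b by simp
  then show thesis by (rule that[rotated]) (use B(1) b in simp)
qed

text \<open>Subtracting from the last column the combination c of the others; when this clears the
  column above the diagonal, Laplace expansion along it leaves one term.\<close>

lemma det_eliminate_last_column:
  fixes M :: "'a::comm_ring_1 mat"
  assumes M: "M \<in> carrier_mat (Suc n) (Suc n)"
    and col: "\<And>i. i < n \<Longrightarrow> M $$ (i, n) = (\<Sum>l<n. M $$ (i, l) * c l)"
  shows "det M = (M $$ (n, n) - (\<Sum>l<n. M $$ (n, l) * c l)) * det (mat_delete M n n)"
proof -
  define E where "E = mat (Suc n) (Suc n) (\<lambda>(i, k). if i = k then 1 else if k = n then - c i else 0)"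
  have E: "E \<in> carrier_mat (Suc n) (Suc n)" by (simp add: E_def)
  have "upper_triangular E" by (auto simp: upper_triangular_def E_def)
  then have "det E = 1"
    using det_upper_triangular[OF _ E] by (simp add: prod_list_diag_prod E_def)
  define G where "G = M * E"
  have G: "G \<in> carrier_mat (Suc n) (Suc n)" using M E by (simp add: G_def)
  have "det G = det M" unfolding G_def det_mult[OF M E] \<open>det E = 1\<close> by simp
  have G_entry: "G $$ (i, k) = (\<Sum>l<Suc n. M $$ (i, l) * E $$ (l, k))"
    if "i < Suc n" "k < Suc n" for i k
    using that M E by (simp add: G_def scalar_prod_def atLeast0LessThan)
  have G_left: "G $$ (i, k) = M $$ (i, k)" if "i < Suc n" "k < n" for i k
  proof -
    have "G $$ (i, k) = (\<Sum>l<Suc n. if l = k then M $$ (i, l) else 0)"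
      unfolding G_entry[OF that(1) less_SucI[OF that(2)]] using that
      by (intro sum.cong) (auto simp: E_def)
    then show ?thesis using that by simp
  qed
  have G_last: "G $$ (i, n) = M $$ (i, n) - (\<Sum>l<n. M $$ (i, l) * c l)" if "i < Suc n" for i
  proof -
    have "(\<Sum>l<n. M $$ (i, l) * E $$ (l, n)) = (\<Sum>l<n. - (M $$ (i, l) * c l))"
      by (intro sum.cong) (auto simp: E_def)
    then show ?thesis
      unfolding G_entry[OF that lessI] by (simp add: sum_negf E_def)
  qed
  have "mat_delete G n n = mat_delete M n n"
    using G M by (intro eq_matI) (auto simp: mat_delete_def G_left)
  have "det G = (\<Sum>i<Suc n. G $$ (i, n) * cofactor G i n)"
    by (rule laplace_expansion_column[OF G]) simp
  also have "\<dots> = G $$ (n, n) * cofactor G n n"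
    by (simp add: G_last col)
  finally show ?thesis
    using \<open>det G = det M\<close> \<open>mat_delete G n n = mat_delete M n n\<close>
    by (simp add: G_last cofactor_def)
qed

lemma mat_delete_Jmat_snoc: "mat_delete (Jmat j (xs @ [w])) (length xs) (length xs) = Jmat j xs"
  by (intro eq_matI) (auto simp: mat_delete_def Jmat_def nth_append)

lemma det_Jmat_perm:
  assumes "mset xs = mset ys"
  shows "det (Jmat j xs) = det (Jmat j ys)"
proof -
  obtain p where p: "p permutes {..<length ys}" "permute_list p ys = xs"
    using mset_eq_permutation[OF assms] by blast
  let ?n = "length ys"
  have len: "length xs = ?n" using assms by (metis size_mset)
  have p': "p permutes {0..<?n}" using p(1) by (simp add: lessThan_atLeast0)
  have pin: "i < ?n \<Longrightarrow> p i < ?n" for i using permutes_in_image[OF p(1)] by auto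
  let ?A = "Jmat j ys"
  define C where "C = mat ?n ?n (\<lambda>(i, k). ?A $$ (p i, k))"
  have C: "C \<in> carrier_mat ?n ?n" by (simp add: C_def)
  have xs_rows: "Jmat j xs = transpose_mat (mat ?n ?n (\<lambda>(i, k). transpose_mat C $$ (p i, k)))"
    by (rule eq_matI) (auto simp: Jmat_def C_def len p(2)[symmetric] permute_list_nth[OF p(1)] pin)
  have "det (Jmat j xs) = signof p * det (transpose_mat C)"
    unfolding xs_rows
    by (subst det_transpose[of _ ?n]) (use C in \<open>auto intro: det_permute_rows[OF _ p']\<close>)
  also have "\<dots> = signof p * signof p * det ?A"
    using det_transpose[OF C] det_permute_rows[OF Jmat_carrier p'] by (simp add: C_def)
  also have "signof p * signof p = (1::complex)" by (simp add: sign_def)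
  finally show ?thesis by simp
qed

lemma detJ_eq_det_Jmat: "mset xs = M \<Longrightarrow> detJ j M = det (Jmat j xs)"
  unfolding detJ_def by (metis (mono_tags, lifting) det_Jmat_perm someI_ex)

context pos_semidef_kernel
begin

lemma det_Jmat_snoc_degenerate:
  assumes "det (Jmat j xs) = 0"
  shows "det (Jmat j (xs @ [w])) = 0"
proof -
  let ?n = "length xs"
  obtain v where v: "v \<in> carrier_vec ?n" "v \<noteq> 0\<^sub>v ?n" "Jmat j xs *\<^sub>v v = 0\<^sub>v ?n"
    using det_0_iff_vec_prod_zero_field[OF Jmat_carrier] assms by blast
  have kernel: "kernel_form j [(1, xs ! i)] (vec_comb v xs) = 0" if "i < ?n" for i
    using Jmat_mult_vec[OF that v(1), of j] v(3) that by simp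
  have "kernel_form j (vec_comb v xs) (vec_comb v xs) = 0"
    by (rule kernel_form_left_eq_0) (auto simp: vec_comb_points in_set_conv_nth kernel)
  then have null: "kernel_form j U (vec_comb v xs) = 0" for U
    by (rule kernel_form_null)
  define v' where "v' = vec (Suc ?n) (\<lambda>i. if i < ?n then v $ i else 0)"
  have v': "v' \<in> carrier_vec (Suc ?n)" by (simp add: v'_def)
  have "vec_comb v' (xs @ [w]) = vec_comb v xs @ [(0, w)]"
    by (auto simp: vec_comb_def v'_def nth_append)
  then have "(Jmat j (xs @ [w]) *\<^sub>v v') $ i = 0" if "i < Suc ?n" for i
    using Jmat_mult_vec[of i "xs @ [w]" v' j] v' that null[of "[(1, (xs @ [w]) ! i)]"]
    by (simp add: kernel_form_append_right kernel_form_point)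
  then have "Jmat j (xs @ [w]) *\<^sub>v v' = 0\<^sub>v (Suc ?n)"
    by (intro eq_vecI) auto
  moreover have "v' \<noteq> 0\<^sub>v (Suc ?n)"
  proof
    assume "v' = 0\<^sub>v (Suc ?n)"
    then have "v = 0\<^sub>v ?n" using v(1)
      by (intro eq_vecI) (auto simp: v'_def vec_eq_iff, metis less_SucI)
    then show False using v(2) by simp
  qed
  ultimately show ?thesis
    using det_0_iff_vec_prod_zero_field[OF Jmat_carrier, of j "xs @ [w]"] v' by auto
qed

lemma det_Jmat_snoc:
  "det (Jmat j (xs @ [w])) = det (Jmat j xs) * of_real (sqdist_span j (set xs) w)"
proof (cases "det (Jmat j xs) = 0")
  case True
  then show ?thesis using det_Jmat_snoc_degenerate by simp
next
  case False
  let ?n = "length xs"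
  obtain c where c: "c \<in> carrier_vec ?n" "Jmat j xs *\<^sub>v c = vec ?n (\<lambda>k. j (xs ! k - w))"
    using det_nonzero_imp_solvable[OF Jmat_carrier False, where b = "vec ?n (\<lambda>k. j (xs ! k - w))"]
    by auto
  define D where "D = (1, w) # scale_comb (-1) (vec_comb c xs)"
  have D_point: "kernel_form j [(1, y)] D = j (y - w) - (\<Sum>k<?n. c $ k * j (y - xs ! k))" for y
  proof -
    have "kernel_form j [(1, y)] D = j (y - w) + kernel_form j [(1, y)] (scale_comb (-1) (vec_comb c xs))"
      by (simp add: D_def kernel_form_point)
    then show ?thesis by (simp add: kernel_form_scale_right kernel_form_point_vec_comb)
  qed
  have solves: "(\<Sum>k<?n. c $ k * j (xs ! i - xs ! k)) = j (xs ! i - w)" if "i < ?n" for i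
    using Jmat_mult_vec[OF that c(1), of j] c(2) that
    by (simp add: kernel_form_point_vec_comb)
  have orth: "kernel_form j [(1, y)] D = 0" if "y \<in> set xs" for y
    using that solves by (auto simp: D_point in_set_conv_nth)
  have "det (Jmat j (xs @ [w])) = kernel_form j [(1, w)] D * det (Jmat j xs)"
    by (subst det_eliminate_last_column[where c = "\<lambda>l. c $ l"])
      (auto simp: D_point nth_append mat_delete_Jmat_snoc mult.commute solves)
  also have "kernel_form j [(1, w)] D = kernel_form j D D"
  proof -
    have "kernel_form j (scale_comb (-1) (vec_comb c xs)) D = 0"
      by (rule kernel_form_left_eq_0) (simp add: vec_comb_points orth)
    then show ?thesis
      using kernel_form_append_left[of j "[(1, w)]" "scale_comb (-1) (vec_comb c xs)" D]
      by (simp add: D_def)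
  qed
  also have "\<dots> = of_real (sqdist_span j (set xs) w)"
    unfolding D_def
    by (rule sqdist_span_eq_residual)
      (use orth in \<open>simp_all add: D_def vec_comb_points\<close>)
  finally show ?thesis by simp
qed

lemma det_Jmat_append: "det (Jmat j (xs @ ys)) = det (Jmat j xs) * of_real (sqdist_prod j (set xs) ys)"
proof (induction ys rule: rev_induct)
  case (snoc y ys)
  have "sqdist_prod j (set xs) (ys @ [y]) = sqdist_prod j (set xs) ys * sqdist_span j (set (xs @ ys)) y"
    unfolding sqdist_prod_def by (auto simp: nth_append Un_commute intro!: prod.cong)
  then show ?case
    using det_Jmat_snoc[of "xs @ ys" y] snoc.IH by simp
qed (simp add: sqdist_prod_def)

end

section \<open>Fourier transforms of finite measures are positive semidefinite\<close>

lemma integral_sum_list: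
  fixes f :: "'b \<Rightarrow> 'a \<Rightarrow> complex"
  assumes "\<And>x. x \<in> set xs \<Longrightarrow> integrable M (f x)"
  shows "integrable M (\<lambda>t. \<Sum>x\<leftarrow>xs. f x t)"
    and "integral\<^sup>L M (\<lambda>t. \<Sum>x\<leftarrow>xs. f x t) = (\<Sum>x\<leftarrow>xs. integral\<^sup>L M (f x))"
  using assms by (induction xs) auto

lemma pos_semidef_kernel_fourier:
  fixes j :: "'a::euclidean_space \<Rightarrow> complex" and \<rho> :: "'a measure"
  assumes "finite_measure \<rho>" and "sets \<rho> = sets borel" and "\<kappa> \<ge> 0"
    and j: "\<And>x. j x = of_real \<kappa> * (LINT t|\<rho>. exp (\<i> * of_real (x \<bullet> t)))"
  shows "pos_semidef_kernel j"
proof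
  let ?e = "\<lambda>(x::'a) t. exp (\<i> * complex_of_real (x \<bullet> t))"
  have integrable_e: "integrable \<rho> (?e x)" for x
  proof (rule finite_measure.integrable_const_bound[OF \<open>finite_measure \<rho>\<close>, where B = 1])
    have "?e x \<in> borel_measurable borel"
      by (intro borel_measurable_continuous_onI continuous_intros)
    then show "?e x \<in> borel_measurable \<rho>"
      by (simp only: measurable_cong_sets[OF \<open>sets \<rho> = sets borel\<close> refl])
  qed (simp add: norm_exp_i_times)
  show "j (- x) = cnj (j x)" for x
  proof -
    have "j (- x) = of_real \<kappa> * (LINT t|\<rho>. cnj (?e x t))"
      unfolding j by (simp add: exp_cnj)
    then show ?thesis unfolding j integral_cnj by simp
  qed
  fix L :: "(complex \<times> 'a) list"
  define \<phi> where "\<phi> t = (\<Sum>q\<leftarrow>L. fst q * cnj (?e (snd q) t))" for t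
  have square: "(\<Sum>p\<leftarrow>L. \<Sum>q\<leftarrow>L. cnj (fst p) * fst q * ?e (snd p - snd q) t) = of_real ((cmod (\<phi> t))\<^sup>2)"
    for t
  proof -
    have "?e (a - b) t = ?e a t * cnj (?e b t)" for a b
      by (simp add: exp_cnj exp_add[symmetric] inner_diff_left algebra_simps)
    then have "(\<Sum>p\<leftarrow>L. \<Sum>q\<leftarrow>L. cnj (fst p) * fst q * ?e (snd p - snd q) t) = cnj (\<phi> t) * \<phi> t"
      unfolding \<phi>_def cnj_sum_list
      by (simp add: sum_list_const_mult[symmetric] sum_list_mult_const[symmetric] exp_cnj ac_simps)
    also have "\<dots> = of_real ((cmod (\<phi> t))\<^sup>2)"
      using complex_norm_square[of "\<phi> t"] by (simp add: mult.commute)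
    finally show ?thesis .
  qed
  define g where "g p q t = cnj (fst p) * fst q * ?e (snd p - snd q) t" for p q t
  have inner: "integrable \<rho> (\<lambda>t. \<Sum>q\<leftarrow>L. g p q t)"
    "(LINT t|\<rho>. (\<Sum>q\<leftarrow>L. g p q t)) = (\<Sum>q\<leftarrow>L. LINT t|\<rho>. g p q t)" for p
    by (rule integral_sum_list; simp add: g_def integrable_e)+
  have "kernel_form j L L = of_real \<kappa> * (\<Sum>p\<leftarrow>L. \<Sum>q\<leftarrow>L. LINT t|\<rho>. g p q t)"
    by (simp add: kernel_form_def g_def j sum_list_const_mult[symmetric] mult_ac)
  also have "\<dots> = of_real \<kappa> * (LINT t|\<rho>. (\<Sum>p\<leftarrow>L. \<Sum>q\<leftarrow>L. g p q t))"
    by (simp add: inner integral_sum_list(2))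
  also have "\<dots> = of_real (\<kappa> * (LINT t|\<rho>. (cmod (\<phi> t))\<^sup>2))"
    unfolding g_def square integral_complex_of_real by simp
  finally have "kernel_form j L L = of_real (\<kappa> * (LINT t|\<rho>. (cmod (\<phi> t))\<^sup>2))" .
  moreover have "0 \<le> \<kappa> * (LINT t|\<rho>. (cmod (\<phi> t))\<^sup>2)"
    using \<open>\<kappa> \<ge> 0\<close> by (intro mult_nonneg_nonneg integral_nonneg) auto
  ultimately show "kernel_form j L L \<in> \<real>" "0 \<le> Re (kernel_form j L L)" by simp_all
qed

section \<open>Monotonicity of the energy in the boundary configuration\<close>

context pos_semidef_kernel
begin

lemma energy_eq_neg_ln_sqdist_prod:
  assumes a: "mset a = A" and s: "mset s = S" and "detJ j S \<noteq> 0"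
  defines "P \<equiv> sqdist_prod j (set s) a"
  shows "U_J j A + W_J j A S = (if P = 0 then \<infinity> else ereal (- ln P))"
proof -
  define P\<^sub>0 where "P\<^sub>0 = sqdist_prod j {} a"
  define d where "d = sqdist_prod j {} s"
  have "P \<le> P\<^sub>0" "0 \<le> P" "0 \<le> d"
    unfolding P_def P\<^sub>0_def d_def by (simp_all add: sqdist_prod_antimono sqdist_prod_nonneg)
  have det_S: "detJ j S = of_real d"
    using detJ_eq_det_Jmat[OF s] det_Jmat_append[of "[]" s] by (simp add: d_def)
  then have "0 < d" using \<open>detJ j S \<noteq> 0\<close> \<open>0 \<le> d\<close> by auto
  have det_AS: "detJ j (A + S) = of_real d * of_real P"
    using detJ_eq_det_Jmat[of "s @ a" "A + S"] a s det_Jmat_append[of s a] det_Jmat_append[of "[]" s]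
    by (simp add: P_def d_def add.commute)
  have det_A: "detJ j A = of_real P\<^sub>0"
    using detJ_eq_det_Jmat[OF a] det_Jmat_append[of "[]" a] by (simp add: P\<^sub>0_def)
  show ?thesis
  proof (cases "P = 0")
    case True
    then show ?thesis using det_AS by (simp add: W_J_def U_J_def)
  next
    case False
    then have "0 < P" "0 < P\<^sub>0" using \<open>0 \<le> P\<close> \<open>P \<le> P\<^sub>0\<close> by linarith+
    then have "U_J j A + W_J j A S = ereal (- ln P\<^sub>0) + (ereal (- ln (d * P)) - ereal (- ln P\<^sub>0) - ereal (- ln d))"
      using det_A det_S det_AS \<open>0 < d\<close> by (simp add: U_J_def W_J_def norm_mult)
    also have "\<dots> = ereal (- ln P)" using \<open>0 < P\<close> \<open>0 < d\<close> by (simp add: ln_mult)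
    finally show ?thesis using False by simp
  qed
qed

lemma energy_mono:
  assumes "S \<subseteq># S'" and "detJ j S \<noteq> 0" and "detJ j S' \<noteq> 0"
  shows "U_J j A + W_J j A S \<le> U_J j A + W_J j A S'"
proof -
  obtain a s t where a: "mset a = A" and s: "mset s = S" and t: "mset t = S' - S"
    by (metis ex_mset)
  have st: "mset (s @ t) = S'" using s t assms(1) by simp
  have "sqdist_prod j (set (s @ t)) a \<le> sqdist_prod j (set s) a" "0 \<le> sqdist_prod j (set (s @ t)) a"
    by (simp_all add: sqdist_prod_antimono sqdist_prod_nonneg)
  then show ?thesis
    unfolding energy_eq_neg_ln_sqdist_prod[OF a s assms(2)] energy_eq_neg_ln_sqdist_prod[OF a st assms(3)]
    by auto
qed

end

lemma restr_config_mono: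
  assumes "S \<subseteq> S'" and "finite {x\<in>S'. 0 < \<xi> x}"
  shows "restr_config \<xi> S \<subseteq># restr_config \<xi> S'"
proof -
  have "{x\<in>S. 0 < \<xi> x} \<subseteq> {x\<in>S'. 0 < \<xi> x}" using assms(1) by auto
  then have "restr_config \<xi> S' =
      (\<Sum>x\<in>{x\<in>S'. 0 < \<xi> x} - {x\<in>S. 0 < \<xi> x}. replicate_mset (\<xi> x) x) + restr_config \<xi> S"
    unfolding restr_config_def by (rule sum.subset_diff[OF _ assms(2)])
  then show ?thesis by simp
qed

lemma xi_hat_mono:
  assumes "locally_finite_config \<xi>" and "bounded \<Delta>'" and "\<Delta> \<subseteq> \<Delta>'"
  shows "xi_hat j \<Lambda> \<xi> \<Delta> \<subseteq># xi_hat j \<Lambda> \<xi> \<Delta>'"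
proof -
  have "finite {x \<in> \<Delta>'. 0 < \<xi> x}"
    using assms(1,2) by (simp add: locally_finite_config_def)
  then have "finite {x \<in> \<Delta>' \<inter> boundary_pts j \<Lambda> \<xi>. 0 < \<xi> x}"
    by (rule finite_subset[rotated]) auto
  then show ?thesis
    unfolding xi_hat_def using assms(3) by (intro restr_config_mono) auto
qed

lemma tendsto_incr_to_univ_mono:
  fixes f :: "'a::euclidean_space set \<Rightarrow> ereal" and \<Lambda> :: "'a set"
  defines "\<I> \<equiv> {\<Delta>. bounded \<Delta> \<and> \<Delta> \<in> sets borel \<and> \<Lambda> \<subseteq> \<Delta>}"
  assumes "bounded \<Lambda>" and "\<Lambda> \<in> sets borel"
    and mono: "\<And>\<Delta> \<Delta>'. \<Delta> \<in> \<I> \<Longrightarrow> \<Delta>' \<in> \<I> \<Longrightarrow> \<Delta> \<subseteq> \<Delta>' \<Longrightarrow> f \<Delta> \<le> f \<Delta>'"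
  shows "(f \<longlongrightarrow> (SUP \<Delta>\<in>\<I>. f \<Delta>)) (incr_to_univ \<Lambda>)"
proof -
  have eventually_above: "eventually (\<lambda>\<Delta>. \<Delta> \<in> \<I> \<and> \<Delta>\<^sub>0 \<subseteq> \<Delta>) (incr_to_univ \<Lambda>)" if "\<Delta>\<^sub>0 \<in> \<I>" for \<Delta>\<^sub>0
    unfolding incr_to_univ_def
    by (rule eventually_INF1[OF that[unfolded \<I>_def]]) (use that in \<open>auto simp: eventually_principal \<I>_def\<close>)
  show ?thesis
  proof (rule order_tendstoI)
    fix y assume "y < (SUP \<Delta>\<in>\<I>. f \<Delta>)"
    then obtain \<Delta>\<^sub>0 where "\<Delta>\<^sub>0 \<in> \<I>" "y < f \<Delta>\<^sub>0" by (auto simp: less_SUP_iff)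
    with eventually_above[OF \<open>\<Delta>\<^sub>0 \<in> \<I>\<close>] show "eventually (\<lambda>\<Delta>. y < f \<Delta>) (incr_to_univ \<Lambda>)"
      by (elim eventually_mono) (auto dest: mono[OF \<open>\<Delta>\<^sub>0 \<in> \<I>\<close>])
  next
    fix y assume "(SUP \<Delta>\<in>\<I>. f \<Delta>) < y"
    have "\<Lambda> \<in> \<I>" using assms by (simp add: \<I>_def)
    with eventually_above[OF this] show "eventually (\<lambda>\<Delta>. f \<Delta> < y) (incr_to_univ \<Lambda>)"
      by (elim eventually_mono) (meson SUP_upper \<open>(SUP \<Delta>\<in>\<I>. f \<Delta>) < y\<close> le_less_trans)
  qed
qed

theorem lemma3p2:
  fixes j :: "real^'d \<Rightarrow> complex"
    and \<rho> :: "(real^'d) measure"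
    and \<Lambda> :: "(real^'d) set"
    and \<zeta> :: "(real^'d) set"
    and \<xi> :: "real^'d \<Rightarrow> nat"
  assumes "finite_measure \<rho>" and "sets \<rho> = sets borel"
    and j_def: "\<And>x. j x = complex_of_real ((2 * pi) powr (- real CARD('d))) *
                  (LINT t|\<rho>. exp (\<i> * complex_of_real (x \<bullet> t)))"
    and "integrable lborel j"
    and "bounded \<Lambda>" and "\<Lambda> \<in> sets borel"
    and "finite \<zeta>" and "\<zeta> \<subseteq> \<Lambda>"
    and "\<xi> \<in> possible_bc j \<Lambda>"
  shows "\<exists>L::ereal. ((\<lambda>\<Delta>. U_J j (mset_set \<zeta>) + W_J j (mset_set \<zeta>) (xi_hat j \<Lambda> \<xi> (\<Delta> - \<Lambda>)))
                 \<longlongrightarrow> L) (incr_to_univ \<Lambda>)"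
proof -
  interpret pos_semidef_kernel j
    by (rule pos_semidef_kernel_fourier[OF assms(1,2) _ j_def]) simp
  have lf: "locally_finite_config \<xi>"
    and det: "\<And>D. bounded D \<Longrightarrow> D \<subseteq> - \<Lambda> \<Longrightarrow> detJ j (xi_hat j \<Lambda> \<xi> D) \<noteq> 0"
    using \<open>\<xi> \<in> possible_bc j \<Lambda>\<close> unfolding possible_bc_def by auto
  let ?E = "\<lambda>\<Delta>. U_J j (mset_set \<zeta>) + W_J j (mset_set \<zeta>) (xi_hat j \<Lambda> \<xi> (\<Delta> - \<Lambda>))"
  have mono: "?E \<Delta> \<le> ?E \<Delta>'" if "bounded \<Delta>'" and "\<Delta> \<subseteq> \<Delta>'" for \<Delta> \<Delta>'
  proof (rule energy_mono)
    show "xi_hat j \<Lambda> \<xi> (\<Delta> - \<Lambda>) \<subseteq># xi_hat j \<Lambda> \<xi> (\<Delta>' - \<Lambda>)"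
      using lf that by (intro xi_hat_mono) (auto intro: bounded_diff)
    have "bounded \<Delta>" using that bounded_subset by blast
    then show "detJ j (xi_hat j \<Lambda> \<xi> (\<Delta> - \<Lambda>)) \<noteq> 0" "detJ j (xi_hat j \<Lambda> \<xi> (\<Delta>' - \<Lambda>)) \<noteq> 0"
      using det[of "\<Delta> - \<Lambda>"] det[of "\<Delta>' - \<Lambda>"] \<open>bounded \<Delta>'\<close> bounded_diff by blast+
  qed
  have "(?E \<longlongrightarrow> (SUP \<Delta>\<in>{\<Delta>. bounded \<Delta> \<and> \<Delta> \<in> sets borel \<and> \<Lambda> \<subseteq> \<Delta>}. ?E \<Delta>)) (incr_to_univ \<Lambda>)"
    by (rule tendsto_incr_to_univ_mono[OF \<open>bounded \<Lambda>\<close> \<open>\<Lambda> \<in> sets borel\<close>]) (simp add: mono)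
  then show ?thesis by blast
qed

end
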